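(* Let $\mathcal{P}$ be a set of $d$-dimensional $k$-templates and let $X$ be an infinite set. If $\mathcal{P}=\varnothing$, then $\chi(L(X^d,\mathcal{P}))=1$. If $\mathcal{P}\ne\varnothing$, then $\chi(L(X^d,\mathcal{P}))=|X|^{-(e-1)}$, where $e=\min\{e(P):P\in\mathcal{P}\}$.
   Context: A $d$-dimensional $k$-template ($2\le k<\omega$, $d<\omega$) is a set $P$ of $d$-tuples with $|P|=k$. A homomorphism between $d$-dimensional $k$-templates $P\to Q$ is a one-to-one map $f$ such that whenever $x,y\in P$, $i<d$ and $x_i=y_i$, then $f(x)_i=f(y)_i$; $Q$ is a homomorphic image of $P$ if such $f$ exists. For a set $\mathcal{P}$ of $d$-dimensional $k$-templates, $L(X^d,\mathcal{P})$ is the $k$-hypergraph with vertex set $X^d$ whose edges are the $k$-element subsets $Q\subseteq X^d$ that are homomorphic images of some $P\in\mathcal{P}$. A subset $I\subseteq d=\{0,\dots,d-1\}$ is a distinguisher for $P$ if whenever $x,y\in P$ are distinct then $x_i\ne y_i$ for some $i\in I$; $e(P)$ is the least cardinality of a distinguisher for $P$. A coloring $\varphi:V\to C$ of a $k$-hypergraph $(V,E)$ is proper if no edge is monochromatic; $\chi(H)$ is the least cardinal $\kappa$ admitting a proper $\kappa$-coloring. For an infinite cardinal $\kappa$ and $m<\omega$, $\kappa^{+m}$ is the $m$-th successor of $\kappa$, and $\kappa^{-m}$ is the least cardinal $\lambda$ with $\lambda^{+m}\ge\kappa$. *)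

theory Defs
  imports Main
begin

definition tuples :: "'b set \<Rightarrow> nat \<Rightarrow> 'b list set" where
  "tuples X d = {xs. length xs = d \<and> set xs \<subseteq> X}"

definition is_template :: "nat \<Rightarrow> nat \<Rightarrow> 'a list set \<Rightarrow> bool" where
  "is_template d k P \<longleftrightarrow> finite P \<and> card P = k \<and> (\<forall>x\<in>P. length x = d)"

definition template_hom :: "nat \<Rightarrow> 'a list set \<Rightarrow> 'b list set \<Rightarrow> ('a list \<Rightarrow> 'b list) \<Rightarrow> bool" where
  "template_hom d P Q f \<longleftrightarrow> f ` P \<subseteq> Q \<and> inj_on f P \<and>
     (\<forall>x\<in>P. \<forall>y\<in>P. \<forall>i<d. x ! i = y ! i \<longrightarrow> f x ! i = f y ! i)"

definition hom_image :: "nat \<Rightarrow> 'a list set \<Rightarrow> 'b list set \<Rightarrow> bool" where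
  "hom_image d P Q \<longleftrightarrow> (\<exists>f. template_hom d P Q f)"

definition L_edges :: "'b set \<Rightarrow> nat \<Rightarrow> nat \<Rightarrow> 'a list set set \<Rightarrow> 'b list set set" where
  "L_edges X d k \<P> = {Q. Q \<subseteq> tuples X d \<and> finite Q \<and> card Q = k \<and> (\<exists>P\<in>\<P>. hom_image d P Q)}"

definition distinguisher :: "nat \<Rightarrow> 'a list set \<Rightarrow> nat set \<Rightarrow> bool" where
  "distinguisher d P I \<longleftrightarrow> I \<subseteq> {..<d} \<and>
     (\<forall>x\<in>P. \<forall>y\<in>P. x \<noteq> y \<longrightarrow> (\<exists>i\<in>I. x ! i \<noteq> y ! i))"

definition e_num :: "nat \<Rightarrow> 'a list set \<Rightarrow> nat" where
  "e_num d P = (LEAST n. \<exists>I. distinguisher d P I \<and> card I = n)"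

definition proper_coloring :: "'v set \<Rightarrow> 'v set set \<Rightarrow> 'c set \<Rightarrow> ('v \<Rightarrow> 'c) \<Rightarrow> bool" where
  "proper_coloring V E C \<phi> \<longleftrightarrow> \<phi> ` V \<subseteq> C \<and>
     (\<forall>Q\<in>E. \<exists>u\<in>Q. \<exists>v\<in>Q. \<phi> u \<noteq> \<phi> v)"

(* |K| is the chromatic number of (V,E): K admits a proper colouring and
   |K| \<le> |C| for every colour set C (of the same type) admitting one *)
definition chromatic_number_is :: "'v set \<Rightarrow> 'v set set \<Rightarrow> 'c set \<Rightarrow> bool" where
  "chromatic_number_is V E K \<longleftrightarrow> (\<exists>\<phi>. proper_coloring V E K \<phi>) \<and>
     (\<forall>C::'c set. (\<exists>\<phi>. proper_coloring V E C \<phi>) \<longrightarrow> (card_of K, card_of C) \<in> ordLeq)"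

(* csucc_rel m A B: |B| = |A|^{+m} (iterated cardinal successor) *)
fun csucc_rel :: "nat \<Rightarrow> 'u set \<Rightarrow> 'u set \<Rightarrow> bool" where
  "csucc_rel 0 A B \<longleftrightarrow> (card_of B, card_of A) \<in> ordIso"
| "csucc_rel (Suc m) A B \<longleftrightarrow> (\<exists>C. csucc_rel m A C \<and> (card_of B, cardSuc (card_of C)) \<in> ordIso)"

(* |A|^{+m} \<ge> |X|, phrased as "not |A|^{+m} < |X|" (all cardinals below |X|
   are realised by sets of the type of X) *)
definition succ_ge :: "nat \<Rightarrow> 'u set \<Rightarrow> 'u set \<Rightarrow> bool" where
  "succ_ge m A X \<longleftrightarrow> \<not> (\<exists>B. csucc_rel m A B \<and> (card_of B, card_of X) \<in> ordLess)"

(* |K| = |X|^{-m}: least cardinal \<lambda> with \<lambda>^{+m} \<ge> |X| *)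
definition card_minus_is :: "'u set \<Rightarrow> nat \<Rightarrow> 'u set \<Rightarrow> bool" where
  "card_minus_is X m K \<longleftrightarrow> succ_ge m K X \<and>
     (\<forall>A. succ_ge m A X \<longrightarrow> (card_of K, card_of A) \<in> ordLeq)"

end

theory Submission
  imports Defs "HOL-Library.Countable"
begin

text \<open>
  Upper bound: well-order \<open>X\<close> by its cardinal order. If \<open>|X| \<le> \<kappa>^(+m)\<close> with \<open>\<kappa>\<close> infinite,
  colour a tuple by a position of its largest entry together with its colour in the (inductively
  given) colouring of the initial segment below that entry. Each colour class then carries a
  distinguisher of at most \<open>m\<close> positions, and only \<open>\<kappa>\<close> colours are used. With \<open>m = e - 1\<close> a
  monochromatic edge would have a distinguisher of size below \<open>e\<close>, which pulls back along the
  homomorphism to its template.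

  Lower bound: if \<open>\<kappa>^(+(e-1)) < |X|\<close>, every \<open>\<kappa>\<close>-colouring is constant on some grid, a product of
  \<open>k\<close>-element sets placed on the \<open>e\<close> coordinates of a minimal distinguisher of a template \<open>P\<close>
  with all other coordinates fixed. For infinite \<open>\<kappa>\<close> this is a cardinal pigeonhole argument
  coordinate by coordinate, for finite \<open>\<kappa>\<close> a product Ramsey argument. As those coordinates
  distinguish the points of \<open>P\<close>, the template embeds into the grid as a monochromatic edge.
\<close>

unbundle cardinal_syntax

section \<open>Cardinals and successor chains\<close>

lemma card_of_ordLess_finite_infinite: "finite A \<Longrightarrow> infinite B \<Longrightarrow> |A| <o |B|"
  using finite_ordLess_infinite[OF card_of_Well_order card_of_Well_order] by (simp add: Field_card_of)

lemma card_of_ordLess_or_ordLeq: "|A| <o |B| \<or> |B| \<le>o |A|"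
  using ordLess_or_ordLeq[OF card_of_Well_order card_of_Well_order] .

lemma card_of_ordLess_infinite: "|A| <o |B| \<Longrightarrow> infinite A \<Longrightarrow> infinite B"
  using card_of_ordLeq_infinite ordLess_imp_ordLeq by blast

lemma subset_ordIso_Card_order:
  assumes "Card_order r" "r \<le>o |Y|"
  obtains Y' where "Y' \<subseteq> Y" "|Y'| =o r"
proof -
  have r: "|Field r| =o r" using assms(1) by (rule card_of_Field_ordIso)
  then have "|Field r| \<le>o |Y|" using assms(2) ordIso_ordLeq_trans by blast
  then obtain Y' where "Y' \<subseteq> Y" "|Field r| =o |Y'|"
    using internalize_card_of_ordLeq[of "Field r" "|Y|"] by (auto simp: Field_card_of)
  then show thesis using r that ordIso_symmetric ordIso_transitive by blast
qed

lemma card_of_tuples_ordLeq_infinite: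
  assumes "infinite V" "|W| \<le>o |V|" shows "|tuples W n| \<le>o |V|"
proof (induction n)
  case 0
  have "tuples W 0 = {[]}" by (auto simp: tuples_def)
  then show ?case using card_of_ordLess_finite_infinite[of "{[]}" V] assms(1) ordLess_imp_ordLeq by auto
next
  case (Suc n)
  have eq: "tuples W (Suc n) = (\<lambda>(a, xs). a # xs) ` (W \<times> tuples W n)"
    by (auto simp: tuples_def length_Suc_conv image_def)
  have "|W \<times> tuples W n| \<le>o |V|"
    using Suc assms by (intro card_of_Times_ordLeq_infinite_Field) (simp_all add: Field_card_of card_of_card_order_on)
  then show ?case unfolding eq using card_of_image ordLeq_transitive by blast
qed

lemma csucc_rel_ordLeq: "csucc_rel m A B \<Longrightarrow> |A| \<le>o |B|"
proof (induction m arbitrary: B)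
  case 0
  then show ?case using ordIso_iff_ordLeq by auto
next
  case (Suc m)
  then obtain C where C: "csucc_rel m A C" "|B| =o cardSuc |C|" by auto
  have "|C| \<le>o cardSuc |C|" by (simp add: cardSuc_ordLeq card_of_Card_order)
  then show ?case using Suc.IH[OF C(1)] C(2) ordIso_iff_ordLeq ordLeq_transitive by metis
qed

lemma csucc_rel_finite:
  fixes A X :: "'u set"
  assumes "finite A" "infinite X"
  shows "\<exists>B. csucc_rel m A B \<and> finite B"
proof (induction m)
  case 0
  show ?case using assms(1) card_of_refl by auto
next
  case (Suc m)
  then obtain B where B: "csucc_rel m A B" "finite B" by blast
  have fin: "finite (Field (cardSuc |B| ))"
    using cardSuc_finite[OF card_of_Card_order, of B] B(2) by (simp add: Field_card_of)
  have field: "|Field (cardSuc |B| )| =o cardSuc |B|"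
    by (simp add: card_of_Field_ordIso cardSuc_Card_order card_of_Card_order)
  then have "cardSuc |B| \<le>o |X|"
    using card_of_ordLess_finite_infinite[OF fin assms(2)] ordIso_symmetric ordIso_ordLess_trans
      ordLess_imp_ordLeq by blast
  then obtain B' where B': "B' \<subseteq> X" "|B'| =o cardSuc |B|"
    using subset_ordIso_Card_order[OF cardSuc_Card_order[OF card_of_Card_order]] by blast
  have "finite B'"
    using fin card_of_ordIso_finite[OF ordIso_transitive[OF B'(2) ordIso_symmetric[OF field]]] by blast
  moreover have "csucc_rel (Suc m) A B'" using B(1) B'(2) by auto
  ultimately show ?case by blast
qed

lemma succ_ge_infinite: "succ_ge m K X \<Longrightarrow> infinite X \<Longrightarrow> infinite K"
  using csucc_rel_finite card_of_ordLess_finite_infinite unfolding succ_ge_def by blast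

lemma succ_ge_under:
  assumes "succ_ge (Suc m) K Y" "infinite Y" "y \<in> Y"
  shows "succ_ge m K (under ( |Y| ) y)"
  unfolding succ_ge_def
proof
  let ?U = "under ( |Y| ) y"
  assume "\<exists>B. csucc_rel m K B \<and> |B| <o |?U|"
  then obtain B where B: "csucc_rel m K B" "|B| <o |?U|" by blast
  have "?U = underS ( |Y| ) y \<union> {y}"
    using Refl_under_underS[of "|Y|" y] assms(3) card_of_well_order_on[of Y]
    by (auto simp add: Field_card_of order_on_defs)
  moreover have "|underS ( |Y| ) y| <o |Y|"
    using card_of_underS[OF card_of_Card_order, of y Y] assms(3) by (simp add: Field_card_of)
  ultimately have "|?U| <o |Y|"
    using card_of_Un_ordLess_infinite[OF assms(2) _ card_of_ordLess_finite_infinite[OF _ assms(2)], of _ "{y}"] by simp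
  moreover have "cardSuc |B| \<le>o |?U|"
    using B(2) cardSuc_ordLess_ordLeq card_of_Card_order by blast
  ultimately obtain B' where "B' \<subseteq> ?U" "|B'| =o cardSuc |B|"
    using subset_ordIso_Card_order[OF cardSuc_Card_order[OF card_of_Card_order]] by blast
  moreover have "|B'| <o |Y|"
    using card_of_mono1[OF \<open>B' \<subseteq> ?U\<close>] \<open>|?U| <o |Y|\<close> ordLeq_ordLess_trans by blast
  ultimately show False using assms(1) B(1) unfolding succ_ge_def by auto
qed

lemma card_minus_exists: "\<exists>K. card_minus_is X m K"
proof -
  let ?S = "{|A| |A. succ_ge m A X}"
  have "succ_ge m X X"
    using csucc_rel_ordLeq not_ordLess_ordLeq unfolding succ_ge_def by blast
  then have "|X| \<in> ?S" by blast
  then obtain z where z: "z \<in> ?S" "\<And>y. (y, z) \<in> ordLess \<Longrightarrow> y \<notin> ?S"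
    using wfE_min[OF wf_ordLess] by meson
  then obtain K where K: "succ_ge m K X" "z = |K|" by blast
  have "|K| \<le>o |A|" if "succ_ge m A X" for A
  proof -
    have "\<not> |A| <o |K|" using that z(2) K(2) by blast
    then show ?thesis using card_of_ordLess_or_ordLeq by blast
  qed
  then show ?thesis using K(1) unfolding card_minus_is_def by blast
qed

section \<open>Distinguishers and distinguishing colourings\<close>

lemma distinguisher_mono: "distinguisher d P I \<Longrightarrow> Q \<subseteq> P \<Longrightarrow> distinguisher d Q I"
  unfolding distinguisher_def by blast

lemma distinguisher_template_hom:
  assumes "template_hom d P Q f" "distinguisher d Q I"
  shows "distinguisher d P I"
  unfolding distinguisher_def
proof (intro conjI ballI impI)
  show "I \<subseteq> {..<d}" using assms(2) by (simp add: distinguisher_def)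
  fix x y assume xy: "x \<in> P" "y \<in> P" "x \<noteq> y"
  then have "f x \<noteq> f y" "f x \<in> Q" "f y \<in> Q"
    using assms(1) unfolding template_hom_def inj_on_def by blast+
  then obtain i where i: "i \<in> I" "f x ! i \<noteq> f y ! i"
    using assms(2) unfolding distinguisher_def by blast
  then have "i < d" using assms(2) by (auto simp: distinguisher_def)
  then have "x ! i \<noteq> y ! i" using i(2) assms(1) xy unfolding template_hom_def by blast
  then show "\<exists>i\<in>I. x ! i \<noteq> y ! i" using i(1) by blast
qed

definition distinguishing_coloring ::
    "'k set \<Rightarrow> nat \<Rightarrow> nat \<Rightarrow> 'a set \<Rightarrow> ('a list \<Rightarrow> nat list \<times> 'k) \<Rightarrow> bool" where
  "distinguishing_coloring K m d Y \<phi> \<longleftrightarrow>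
     (\<forall>x\<in>tuples Y d. length (fst (\<phi> x)) \<le> m \<and> snd (\<phi> x) \<in> K \<and>
        distinguisher d {y \<in> tuples Y d. \<phi> y = \<phi> x} (set (fst (\<phi> x))))"

lemma distinguishing_coloring_small:
  assumes "|tuples Y d| \<le>o |K|"
  shows "\<exists>\<phi>. distinguishing_coloring K m d Y \<phi>"
proof -
  obtain h where h: "inj_on h (tuples Y d)" "h ` tuples Y d \<subseteq> K"
    using card_of_ordLeq[of "tuples Y d" K] assms by blast
  then have "distinguishing_coloring K m d Y (\<lambda>x. ([], h x))"
    by (auto simp: distinguishing_coloring_def distinguisher_def inj_on_def)
  then show ?thesis by blast
qed

lemma finite_subset_under_max:
  assumes "finite A" "A \<noteq> {}" "A \<subseteq> Y"
  shows "\<exists>M\<in>A. A \<subseteq> under ( |Y| ) M"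
  using assms
proof (induction A rule: finite_ne_induct)
  case (singleton x)
  then show ?case
    using card_of_well_order_on[of Y] by (auto simp: order_on_defs refl_on_def under_def)
next
  case (insert x F)
  then obtain M where M: "M \<in> F" "F \<subseteq> under ( |Y| ) M" by auto
  have "total_on Y |Y|" "refl_on Y |Y|" "trans |Y|"
    using card_of_well_order_on[of Y] by (auto simp: order_on_defs)
  show ?case
  proof (cases "(x, M) \<in> |Y|")
    case True
    then show ?thesis using M by (auto simp: under_def)
  next
    case False
    have xM: "x \<in> Y" "M \<in> Y" using insert.prems M(1) by auto
    then have "(x, x) \<in> |Y|" "x \<noteq> M"
      using \<open>refl_on Y |Y|\<close> False by (auto simp: refl_on_def)
    moreover have "(M, x) \<in> |Y|"
      using \<open>total_on Y |Y|\<close> xM False calculation(2) unfolding total_on_def by blast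
    ultimately have "insert x F \<subseteq> under ( |Y| ) x"
      using M(2) \<open>trans |Y|\<close> unfolding under_def trans_def by blast
    then show ?thesis by blast
  qed
qed

lemma distinguishing_coloring_Suc:
  assumes "0 < d" and F: "\<forall>y\<in>Y. distinguishing_coloring K m d (under ( |Y| ) y) (F y)"
  shows "\<exists>\<phi>. distinguishing_coloring K (Suc m) d Y \<phi>"
proof -
  define top where "top x = (SOME M. M \<in> set x \<and> set x \<subseteq> under ( |Y| ) M)" for x
  define pos where "pos x = (SOME j. j < d \<and> x ! j = top x)" for x
  have top: "top x \<in> set x \<and> set x \<subseteq> under ( |Y| ) (top x)" if "x \<in> tuples Y d" for x
    unfolding top_def
    by (rule someI_ex)
      (use finite_subset_under_max[of "set x" Y] that assms(1) in \<open>auto simp: tuples_def\<close>)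
  have pos: "pos x < d \<and> x ! pos x = top x" if "x \<in> tuples Y d" for x
    unfolding pos_def
    by (rule someI_ex) (use top[OF that] that in \<open>auto simp: tuples_def in_set_conv_nth\<close>)
  have seg: "x \<in> tuples (under ( |Y| ) (top x)) d" "top x \<in> Y" if "x \<in> tuples Y d" for x
    using top[OF that] that by (auto simp: tuples_def)
  define \<phi> where "\<phi> x = (pos x # fst (F (top x) x), snd (F (top x) x))" for x
  have "distinguishing_coloring K (Suc m) d Y \<phi>"
    unfolding distinguishing_coloring_def
  proof (intro ballI conjI)
    fix x assume x: "x \<in> tuples Y d"
    have Fx: "distinguishing_coloring K m d (under ( |Y| ) (top x)) (F (top x))"
      using F seg(2)[OF x] by blast
    then show "length (fst (\<phi> x)) \<le> Suc m" "snd (\<phi> x) \<in> K"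
      using seg(1)[OF x] unfolding distinguishing_coloring_def \<phi>_def by auto
    show "distinguisher d {y \<in> tuples Y d. \<phi> y = \<phi> x} (set (fst (\<phi> x)))"
      unfolding distinguisher_def
    proof (intro conjI ballI impI)
      show "set (fst (\<phi> x)) \<subseteq> {..<d}"
        using Fx seg(1)[OF x] pos[OF x] unfolding distinguishing_coloring_def distinguisher_def \<phi>_def by auto
      fix y z
      assume y: "y \<in> {y \<in> tuples Y d. \<phi> y = \<phi> x}" and z: "z \<in> {y \<in> tuples Y d. \<phi> y = \<phi> x}"
        and "y \<noteq> z"
      show "\<exists>i\<in>set (fst (\<phi> x)). y ! i \<noteq> z ! i"
      proof (cases "y ! pos x = z ! pos x")
        case False
        then show ?thesis by (simp add: \<phi>_def)
      next
        case True
        have "pos y = pos x" "pos z = pos x" using y z by (auto simp: \<phi>_def)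
        then have top_eq: "top y = top z" using True pos[of y] pos[of z] y z by auto
        let ?M = "top y"
        let ?S = "{w \<in> tuples (under ( |Y| ) ?M) d. F ?M w = F ?M y}"
        have "F ?M z = F ?M y" using y z top_eq by (auto simp: \<phi>_def prod_eq_iff)
        then have "y \<in> ?S" "z \<in> ?S" using seg(1)[of y] seg(1)[of z] y z top_eq by auto
        moreover have "distinguishing_coloring K m d (under ( |Y| ) ?M) (F ?M)"
          using F seg(2) y by blast
        then have "distinguisher d ?S (set (fst (F ?M y)))"
          using seg(1) y unfolding distinguishing_coloring_def by blast
        ultimately obtain i where "i \<in> set (fst (F ?M y))" "y ! i \<noteq> z ! i"
          using \<open>y \<noteq> z\<close> unfolding distinguisher_def by blast
        then show ?thesis using y by (auto simp: \<phi>_def)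
      qed
    qed
  qed
  then show ?thesis by blast
qed

lemma distinguishing_coloring_exists:
  assumes "infinite K" "succ_ge m K Y"
  shows "\<exists>\<phi>. distinguishing_coloring K m d Y \<phi>"
  using assms(2)
proof (induction m arbitrary: Y)
  case 0
  then have "|Y| \<le>o |K|"
    using card_of_refl card_of_ordLess_or_ordLeq unfolding succ_ge_def by auto
  then show ?case
    using distinguishing_coloring_small card_of_tuples_ordLeq_infinite[OF assms(1)] by blast
next
  case (Suc m)
  show ?case
  proof (cases "|Y| \<le>o |K| \<or> d = 0")
    case True
    moreover have "|tuples Y 0| \<le>o |K|"
      using card_of_ordLess_finite_infinite[OF _ assms(1), of "tuples Y 0"] ordLess_imp_ordLeq
      by (simp add: tuples_def)
    ultimately show ?thesis
      using distinguishing_coloring_small card_of_tuples_ordLeq_infinite[OF assms(1)] by blast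
  next
    case False
    then have "infinite Y"
      using assms(1) card_of_ordLess_infinite card_of_ordLess_or_ordLeq by blast
    then have "\<forall>y\<in>Y. \<exists>\<phi>. distinguishing_coloring K m d (under ( |Y| ) y) \<phi>"
      using Suc.IH succ_ge_under[OF Suc.prems] by blast
    then obtain F where "\<forall>y\<in>Y. distinguishing_coloring K m d (under ( |Y| ) y) (F y)"
      by metis
    then show ?thesis using distinguishing_coloring_Suc False by blast
  qed
qed

lemma e_num_le: "distinguisher d P I \<Longrightarrow> e_num d P \<le> card I"
  unfolding e_num_def by (rule Least_le) blast

lemma e_num_distinguisher:
  assumes "is_template d k P"
  shows "\<exists>I. distinguisher d P I \<and> card I = e_num d P"
proof -
  have "distinguisher d P {..<d}"
    using assms unfolding is_template_def distinguisher_def by (auto intro: nth_equalityI)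
  then have "\<exists>n I. distinguisher d P I \<and> card I = n" by blast
  then show ?thesis unfolding e_num_def by (rule LeastI_ex)
qed

lemma e_num_pos:
  assumes "is_template d k P" "2 \<le> k"
  shows "0 < e_num d P"
proof (rule ccontr)
  assume "\<not> 0 < e_num d P"
  then obtain I where I: "distinguisher d P I" "card I = 0"
    using e_num_distinguisher[OF assms(1)] by auto
  then have "I = {}" using finite_subset[of I "{..<d}"] by (auto simp: distinguisher_def)
  then have "card P \<le> 1"
    using I(1) assms(1) card_le_Suc0_iff_eq[of P] by (auto simp: distinguisher_def is_template_def)
  then show False using assms by (auto simp: is_template_def)
qed

lemma proper_coloring_of_distinguishing:
  assumes "infinite K" "distinguishing_coloring K m d X \<phi>" "0 < k" "\<forall>P\<in>\<P>. m < e_num d P"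
  shows "\<exists>\<psi>. proper_coloring (tuples X d) (L_edges X d k \<P>) K \<psi>"
proof -
  let ?LS = "{js. set js \<subseteq> {..<d} \<and> length js \<le> m}"
  have "\<phi> ` tuples X d \<subseteq> ?LS \<times> K"
  proof (rule image_subsetI)
    fix x assume "x \<in> tuples X d"
    then have "length (fst (\<phi> x)) \<le> m" "snd (\<phi> x) \<in> K"
      "distinguisher d {y \<in> tuples X d. \<phi> y = \<phi> x} (set (fst (\<phi> x)))"
      using assms(2) unfolding distinguishing_coloring_def by blast+
    then show "\<phi> x \<in> ?LS \<times> K" by (simp add: distinguisher_def mem_Times_iff)
  qed
  moreover have "|?LS \<times> K| \<le>o |K|"
    using card_of_ordLess_finite_infinite[OF finite_lists_length_le[of "{..<d}" m] assms(1)]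
    by (intro card_of_Times_ordLeq_infinite_Field)
      (simp_all add: Field_card_of card_of_card_order_on assms(1) ordLess_imp_ordLeq card_of_mono1)
  ultimately have "|\<phi> ` tuples X d| \<le>o |K|"
    using card_of_mono1 ordLeq_transitive by blast
  then obtain h where h: "inj_on h (\<phi> ` tuples X d)" "h ` \<phi> ` tuples X d \<subseteq> K"
    using card_of_ordLeq[of "\<phi> ` tuples X d" K] by blast
  have "proper_coloring (tuples X d) (L_edges X d k \<P>) K (h \<circ> \<phi>)"
    unfolding proper_coloring_def
  proof (intro conjI ballI)
    show "(h \<circ> \<phi>) ` tuples X d \<subseteq> K" using h(2) by (simp add: image_comp)
    fix Q assume "Q \<in> L_edges X d k \<P>"
    then obtain P f where Q: "Q \<subseteq> tuples X d" "card Q = k" "P \<in> \<P>" "template_hom d P Q f"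
      unfolding L_edges_def hom_image_def by blast
    then obtain q where q: "q \<in> Q" using assms(3) by fastforce
    then have col_q: "length (fst (\<phi> q)) \<le> m"
      "distinguisher d {y \<in> tuples X d. \<phi> y = \<phi> q} (set (fst (\<phi> q)))"
      using assms(2) Q(1) unfolding distinguishing_coloring_def by blast+
    show "\<exists>u\<in>Q. \<exists>v\<in>Q. (h \<circ> \<phi>) u \<noteq> (h \<circ> \<phi>) v"
    proof (rule ccontr)
      assume "\<not> ?thesis"
      then have mono: "\<forall>u\<in>Q. \<forall>v\<in>Q. h (\<phi> u) = h (\<phi> v)" unfolding comp_apply by blast
      have "\<phi> u = \<phi> q" if "u \<in> Q" for u
      proof (rule inj_onD[OF h(1)])
        show "h (\<phi> u) = h (\<phi> q)" using mono that q by blast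
        show "\<phi> u \<in> \<phi> ` tuples X d" "\<phi> q \<in> \<phi> ` tuples X d" using that q Q(1) by auto
      qed
      then have "Q \<subseteq> {y \<in> tuples X d. \<phi> y = \<phi> q}" using Q(1) by blast
      then have "distinguisher d Q (set (fst (\<phi> q)))"
        by (rule distinguisher_mono[OF col_q(2)])
      then have "e_num d P \<le> card (set (fst (\<phi> q)))"
        using e_num_le distinguisher_template_hom[OF Q(4)] by blast
      also have "\<dots> \<le> m"
        using card_length[of "fst (\<phi> q)"] col_q(1) by linarith
      finally show False using assms(4) Q(3) leD by blast
    qed
  qed
  then show ?thesis by blast
qed

lemma proper_coloring_exists:
  assumes "succ_ge m K X" "infinite X" "0 < k" "\<forall>P\<in>\<P>. m < e_num d P"
  shows "\<exists>\<psi>. proper_coloring (tuples X d) (L_edges X d k \<P>) K \<psi>"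
proof -
  have "infinite K" using succ_ge_infinite assms(1,2) by blast
  moreover obtain \<phi> where "distinguishing_coloring K m d X \<phi>"
    using distinguishing_coloring_exists[OF \<open>infinite K\<close> assms(1)] by blast
  ultimately show ?thesis using proper_coloring_of_distinguishing assms(3,4) by blast
qed

section \<open>Monochromatic grids\<close>

definition in_grid :: "nat list \<Rightarrow> 'a list list \<Rightarrow> 'a list \<Rightarrow> 'a list \<Rightarrow> bool" where
  "in_grid js Ls x0 y \<longleftrightarrow> length y = length x0 \<and>
     (\<forall>i<length x0. i \<notin> set js \<longrightarrow> y ! i = x0 ! i) \<and> (\<forall>t<length js. y ! (js ! t) \<in> set (Ls ! t))"

definition grid_lines :: "nat \<Rightarrow> 'a set \<Rightarrow> 'a list list \<Rightarrow> bool" where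
  "grid_lines n Y Ls \<longleftrightarrow> (\<forall>L\<in>set Ls. length L = n \<and> distinct L \<and> set L \<subseteq> Y)"

lemma in_grid_Nil: "in_grid [] Ls x0 y \<Longrightarrow> y = x0"
  unfolding in_grid_def by (auto intro: nth_equalityI)

lemma in_grid_Cons_rebase:
  assumes "in_grid (j # js) (L # Ls) x0 y" "j < length x0"
  shows "y ! j \<in> set L" "in_grid js Ls (x0[j := y ! j]) y"
proof -
  show "y ! j \<in> set L" using assms(1) unfolding in_grid_def by (auto dest: spec[of _ 0])
  show "in_grid js Ls (x0[j := y ! j]) y"
    using assms unfolding in_grid_def
    by (auto simp: nth_list_update dest: spec[of _ "Suc _"])
qed

lemma in_grid_Cons_reset:
  assumes "in_grid (j # js) (L # Ls) x0 y" "j < length x0" "j \<notin> set js"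
  shows "in_grid js Ls x0 (y[j := x0 ! j])"
  unfolding in_grid_def
proof (intro conjI allI impI)
  show "length (y[j := x0 ! j]) = length x0" using assms(1) by (simp add: in_grid_def)
  fix i assume "i < length x0" "i \<notin> set js"
  then show "y[j := x0 ! j] ! i = x0 ! i"
    using assms(1,2) unfolding in_grid_def by (cases "i = j") auto
next
  fix t assume t: "t < length js"
  then have "js ! t \<noteq> j" using assms(3) by auto
  then show "y[j := x0 ! j] ! (js ! t) \<in> set (Ls ! t)"
    using assms(1) t unfolding in_grid_def by (auto dest: spec[of _ "Suc t"])
qed

lemma distinct_list_of_card:
  assumes "finite S" "n \<le> card S"
  obtains l where "distinct l" "length l = n" "set l \<subseteq> S"
proof -
  obtain T where T: "T \<subseteq> S" "card T = n" "finite T"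
    using assms obtain_subset_with_card_n by (metis finite_subset)
  then obtain l where "set l = T" "distinct l" using finite_distinct_list by blast
  then show thesis using that T distinct_card by fastforce
qed

lemma infinite_fibre_list:
  assumes "infinite A" "g ` A \<subseteq> T" "|T| <o |A|"
  obtains a l where "a \<in> A" "distinct l" "length l = n" "set l \<subseteq> A" "\<forall>b\<in>set l. g b = g a"
proof -
  have "\<exists>v. infinite {a \<in> A. g a = v}"
  proof (rule ccontr)
    assume fin: "\<nexists>v. infinite {a \<in> A. g a = v}"
    have A: "A = (\<Union>v\<in>T. {a \<in> A. g a = v})" using assms(2) by auto
    show False
    proof (cases "finite T")
      case True
      have "finite (\<Union>v\<in>T. {a \<in> A. g a = v})" using True fin by blast
      then show False using A assms(1) by simp
    next
      case False
      have "\<forall>v\<in>T. |{a \<in> A. g a = v}| \<le>o |T|"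
        using fin card_of_ordLess_finite_infinite[OF _ False] ordLess_imp_ordLeq by blast
      then have "|\<Union>v\<in>T. {a \<in> A. g a = v}| \<le>o |T|"
        by (rule card_of_UNION_ordLeq_infinite[OF False card_of_mono1[OF subset_refl]])
      then show False using A assms(3) not_ordLess_ordLeq by auto
    qed
  qed
  then obtain v where v: "infinite {a \<in> A. g a = v}" by blast
  then obtain a where "a \<in> A" "g a = v" using not_finite_existsD by blast
  moreover obtain S where S: "finite S" "card S = n" "S \<subseteq> {a \<in> A. g a = v}"
    using infinite_arbitrarily_large[OF v] by blast
  moreover obtain l where "distinct l" "length l = n" "set l \<subseteq> S"
    using distinct_list_of_card[OF S(1)] S(2) by auto
  ultimately show thesis using that by blast
qed

lemma pigeonhole_card_fibre:
  assumes "finite F" "\<forall>i<n * card F. w i \<in> F" "0 < n * card F"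
  shows "\<exists>\<gamma>\<in>F. n \<le> card {i. i < n * card F \<and> w i = \<gamma>}"
proof (rule ccontr)
  let ?L = "n * card F"
  assume "\<not> ?thesis"
  then have lt: "\<forall>\<gamma>\<in>F. card {i. i < ?L \<and> w i = \<gamma>} \<le> n - 1" by auto
  have "{..<?L} = (\<Union>\<gamma>\<in>F. {i. i < ?L \<and> w i = \<gamma>})" using assms(2) by auto
  then have "?L = card (\<Union>\<gamma>\<in>F. {i. i < ?L \<and> w i = \<gamma>})" by (metis card_lessThan)
  also have "\<dots> \<le> (\<Sum>\<gamma>\<in>F. card {i. i < ?L \<and> w i = \<gamma>})"
    by (rule card_UN_le[OF assms(1)])
  also have "\<dots> \<le> card F * (n - 1)" using sum_mono[OF lt[rule_format]] by simp
  finally have "card F * n \<le> card F * (n - 1)" by (simp add: mult.commute)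
  then show False using assms(3) by (cases n) auto
qed

text \<open>Finite colourings, by induction on the number of free coordinates: the first coordinate
  is handled last, by colouring each tuple with the whole vector of colours it gets along a
  long line in that coordinate.\<close>

lemma monochromatic_grid_finite_nat:
  fixes c :: "'a list \<Rightarrow> nat"
  assumes X: "infinite X" and x0: "x0 \<in> tuples X d"
  shows "c ` tuples X d \<subseteq> F \<Longrightarrow> finite F \<Longrightarrow> distinct js \<Longrightarrow>
    set js \<subseteq> {..<d} \<Longrightarrow> \<exists>Ls \<gamma>. \<gamma> \<in> F \<and> length Ls = length js \<and> grid_lines n X Ls \<and>
      (\<forall>y\<in>tuples X d. in_grid js Ls x0 y \<longrightarrow> c y = \<gamma>)"
proof (induction js arbitrary: c F)
  case Nil
  then show ?case
    using x0 in_grid_Nil by (intro exI[of _ "[]"] exI[of _ "c x0"]) (auto simp: grid_lines_def)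
next
  case (Cons j js)
  have j: "j < length x0" using Cons.prems(4) x0 by (simp add: tuples_def)
  have "F \<noteq> {}" using Cons.prems(1) x0 by auto
  define L where "L = Suc n * card F"
  obtain S where S: "finite S" "card S = L" "S \<subseteq> X"
    using infinite_arbitrarily_large[OF X] by blast
  then obtain line where line: "distinct line" "length line = L" "set line \<subseteq> X"
    using distinct_list_of_card[OF S(1)] by (metis order_refl subset_trans)
  have upd: "y[j := a] \<in> tuples X d" if "y \<in> tuples X d" "a \<in> X" for y a
    using that set_update_subset_insert[of y j a] by (auto simp: tuples_def)
  define c' where "c' y = to_nat (map (\<lambda>a. c (y[j := a])) line)" for y
  define W where "W = {ws. set ws \<subseteq> F \<and> length ws = L}"
  have "c' ` tuples X d \<subseteq> to_nat ` W"
  proof (rule image_subsetI)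
    fix y assume "y \<in> tuples X d"
    then have "\<forall>a\<in>set line. c (y[j := a]) \<in> F"
      using Cons.prems(1) upd line(3) by blast
    then have "map (\<lambda>a. c (y[j := a])) line \<in> W"
      using line(2) unfolding W_def by auto
    then show "c' y \<in> to_nat ` W" unfolding c'_def by blast
  qed
  moreover have "finite (to_nat ` W)"
    unfolding W_def by (intro finite_imageI finite_lists_length_eq Cons.prems(2))
  ultimately obtain Ls' w where IH: "w \<in> W" "length Ls' = length js" "grid_lines n X Ls'"
    "\<forall>y\<in>tuples X d. in_grid js Ls' x0 y \<longrightarrow> c' y = to_nat w"
    using Cons.IH[of c' "to_nat ` W"] Cons.prems(3,4) by auto
  have "\<forall>i<L. w ! i \<in> F" using IH(1) unfolding W_def by auto
  moreover have "0 < L" using \<open>F \<noteq> {}\<close> Cons.prems(2) unfolding L_def by (simp add: card_gt_0_iff)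
  ultimately obtain \<gamma> where \<gamma>: "\<gamma> \<in> F" "Suc n \<le> card {i. i < L \<and> w ! i = \<gamma>}"
    using pigeonhole_card_fibre[OF Cons.prems(2), of "Suc n" "(!) w"] unfolding L_def by blast
  moreover have "finite {i. i < L \<and> w ! i = \<gamma>}" by simp
  ultimately obtain ix where ix: "distinct ix" "length ix = n" "set ix \<subseteq> {i. i < L \<and> w ! i = \<gamma>}"
    using distinct_list_of_card[of "{i. i < L \<and> w ! i = \<gamma>}" n] Suc_leD by blast
  define l where "l = map ((!) line) ix"
  have "inj_on ((!) line) (set ix)"
  proof (rule inj_onI)
    fix a b assume ab: "a \<in> set ix" "b \<in> set ix" "line ! a = line ! b"
    then have "a < length line" "b < length line" using ix(3) line(2) by auto
    then show "a = b" using ab(3) by (simp add: nth_eq_iff_index_eq[OF line(1)])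
  qed
  moreover have "line ! i \<in> X" if "i \<in> set ix" for i
    using that ix(3) line(2,3) nth_mem by fastforce
  ultimately have "grid_lines n X (l # Ls')"
    using ix IH(3) unfolding l_def grid_lines_def by (auto simp: distinct_map)
  moreover have "c y = \<gamma>" if y: "y \<in> tuples X d" "in_grid (j # js) (l # Ls') x0 y" for y
  proof -
    obtain i where i: "i \<in> set ix" "y ! j = line ! i"
      using in_grid_Cons_rebase(1)[OF y(2) j] unfolding l_def by auto
    define y' where "y' = y[j := x0 ! j]"
    have "x0 ! j \<in> X" using x0 j by (auto simp: tuples_def)
    then have "y' \<in> tuples X d" using upd[OF y(1)] unfolding y'_def by blast
    moreover have "in_grid js Ls' x0 y'"
      using in_grid_Cons_reset[OF y(2) j] Cons.prems(3) unfolding y'_def by simp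
    ultimately have "map (\<lambda>a. c (y'[j := a])) line = w" using IH(4) unfolding c'_def by simp
    moreover have "i < L" "w ! i = \<gamma>" using i(1) ix(3) by auto
    ultimately have "c (y'[j := line ! i]) = \<gamma>" using line(2) nth_map[of i line] by auto
    moreover have "y'[j := line ! i] = y[j := y ! j]" using i(2) unfolding y'_def by simp
    ultimately show "c y = \<gamma>" by simp
  qed
  ultimately have "\<gamma> \<in> F \<and> length (l # Ls') = length (j # js) \<and> grid_lines n X (l # Ls') \<and>
      (\<forall>y\<in>tuples X d. in_grid (j # js) (l # Ls') x0 y \<longrightarrow> c y = \<gamma>)"
    using \<gamma>(1) IH(2) by simp
  then show ?case by blast
qed

lemma monochromatic_grid_finite:
  fixes c :: "'a list \<Rightarrow> 'c"
  assumes "infinite X" "x0 \<in> tuples X d" "c ` tuples X d \<subseteq> C" "finite C"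
    "distinct js" "set js \<subseteq> {..<d}"
  shows "\<exists>Ls \<gamma>. \<gamma> \<in> C \<and> length Ls = length js \<and> grid_lines n X Ls \<and>
      (\<forall>y\<in>tuples X d. in_grid js Ls x0 y \<longrightarrow> c y = \<gamma>)"
proof -
  obtain h :: "'c \<Rightarrow> nat" where h: "inj_on h C"
    using finite_imp_inj_to_nat_seg[OF assms(4)] by blast
  have "(h \<circ> c) ` tuples X d \<subseteq> h ` C" using assms(3) by auto
  then have "\<exists>Ls \<gamma>. \<gamma> \<in> h ` C \<and> length Ls = length js \<and> grid_lines n X Ls \<and>
      (\<forall>y\<in>tuples X d. in_grid js Ls x0 y \<longrightarrow> (h \<circ> c) y = \<gamma>)"
    by (rule monochromatic_grid_finite_nat[OF assms(1,2) _ finite_imageI[OF assms(4)] assms(5,6)])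
  then obtain Ls \<gamma> where Ls: "\<gamma> \<in> C" "length Ls = length js" "grid_lines n X Ls"
    "\<forall>y\<in>tuples X d. in_grid js Ls x0 y \<longrightarrow> h (c y) = h \<gamma>"
    by auto
  have "c y = \<gamma>" if "y \<in> tuples X d" "in_grid js Ls x0 y" for y
  proof (rule inj_onD[OF h])
    show "h (c y) = h \<gamma>" using Ls(4) that by blast
    show "c y \<in> C" "\<gamma> \<in> C" using assms(3) that(1) Ls(1) by auto
  qed
  then show ?thesis using Ls(1-3) by blast
qed

text \<open>Infinite colourings, by induction on the number of free coordinates: the first coordinate
  ranges over a set \<open>Y\<close> of size above \<open>\<lambda> = |C|^(+m)\<close>, while the grids found through the points
  \<open>x0[j := a]\<close> all lie in one subset of \<open>Y\<close> of size \<open>\<lambda>\<close>. So there are at most \<open>\<lambda> < |Y|\<close> of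
  them, and infinitely many \<open>a\<close> yield the same grid.\<close>

lemma monochromatic_grid_infinite:
  fixes c :: "'a list \<Rightarrow> 'c"
  assumes "infinite C" "c ` tuples X d \<subseteq> C"
  shows "csucc_rel m C B \<Longrightarrow> |B| <o |Y| \<Longrightarrow> Y \<subseteq> X \<Longrightarrow> x0 \<in> tuples X d \<Longrightarrow>
    distinct js \<Longrightarrow> set js \<subseteq> {..<d} \<Longrightarrow> length js = Suc m \<Longrightarrow>
    \<exists>Ls \<gamma>. \<gamma> \<in> C \<and> length Ls = length js \<and> grid_lines n Y Ls \<and>
      (\<forall>y\<in>tuples X d. in_grid js Ls x0 y \<longrightarrow> c y = \<gamma>)"
proof (induction m arbitrary: B Y x0 js)
  case 0
  then obtain j where js: "js = [j]" by (auto simp: length_Suc_conv)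
  have j: "j < length x0" using "0.prems"(4,6) js by (simp add: tuples_def)
  have "|B| =o |C|" using "0.prems"(1) by simp
  then have CY: "|C| <o |Y|" using ordIso_ordLess_trans[OF ordIso_symmetric "0.prems"(2)] by blast
  then have "infinite Y" using assms(1) card_of_ordLess_infinite by blast
  have upd: "x0[j := a] \<in> tuples X d" if "a \<in> Y" for a
    using that "0.prems"(3,4) set_update_subset_insert[of x0 j a] by (auto simp: tuples_def)
  then have "(\<lambda>a. c (x0[j := a])) ` Y \<subseteq> C" using assms(2) by blast
  then obtain a l where l: "a \<in> Y" "distinct l" "length l = n" "set l \<subseteq> Y"
    "\<forall>b\<in>set l. c (x0[j := b]) = c (x0[j := a])"
    using infinite_fibre_list[OF \<open>infinite Y\<close> _ CY] by blast
  have "c y = c (x0[j := a])" if "y \<in> tuples X d" "in_grid [j] [l] x0 y" for y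
  proof -
    have "y = x0[j := y ! j]" using in_grid_Nil in_grid_Cons_rebase(2)[OF that(2) j] by metis
    then show ?thesis using l(5) in_grid_Cons_rebase(1)[OF that(2) j] by metis
  qed
  moreover have "c (x0[j := a]) \<in> C" using upd[OF l(1)] assms(2) by blast
  ultimately show ?case
    using l js by (intro exI[of _ "[l]"] exI[of _ "c (x0[j := a])"]) (auto simp: grid_lines_def)
next
  case (Suc m)
  then obtain j js' where js: "js = j # js'" "length js' = Suc m" by (auto simp: length_Suc_conv)
  have j: "j < length x0" using Suc.prems(4,6) js by (simp add: tuples_def)
  obtain B' where B': "csucc_rel m C B'" "|B| =o cardSuc |B'|" using Suc.prems(1) by auto
  obtain Y' where Y': "Y' \<subseteq> Y" "|Y'| =o |B|"
    using subset_ordIso_Card_order[OF card_of_Card_order ordLess_imp_ordLeq[OF Suc.prems(2)]] by blast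
  have "|B'| <o cardSuc |B'|" by (simp add: cardSuc_greater card_of_Card_order)
  then have B'Y': "|B'| <o |Y'|"
    using B'(2) Y'(2) ordLess_ordIso_trans ordIso_symmetric ordIso_transitive by metis
  have CY': "|C| \<le>o |Y'|" using csucc_rel_ordLeq[OF B'(1)] B'Y' ordLeq_ordLess_trans ordLess_imp_ordLeq by blast
  have "infinite Y'" using assms(1) CY' card_of_ordLeq_infinite by blast
  have Y'Y: "|Y'| <o |Y|" using Y'(2) Suc.prems(2) ordIso_ordLess_trans by blast
  then have "infinite Y" using \<open>infinite Y'\<close> card_of_ordLess_infinite by blast
  have upd: "x0[j := a] \<in> tuples X d" if "a \<in> Y" for a
    using that Suc.prems(3,4) set_update_subset_insert[of x0 j a] by (auto simp: tuples_def)
  have Y'X: "Y' \<subseteq> X" using Y'(1) Suc.prems(3) by blast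
  have js': "distinct js'" "set js' \<subseteq> {..<d}" "length js' = Suc m"
    using Suc.prems(5,6) js by auto
  define good where "good a p \<longleftrightarrow> snd p \<in> C \<and> length (fst p) = length js' \<and>
      grid_lines n Y' (fst p) \<and>
      (\<forall>y\<in>tuples X d. in_grid js' (fst p) (x0[j := a]) y \<longrightarrow> c y = snd p)" for a p
  have "\<exists>p. good a p" if a: "a \<in> Y" for a
  proof -
    obtain Ls \<gamma> where "\<gamma> \<in> C" "length Ls = length js'" "grid_lines n Y' Ls"
      "\<forall>y\<in>tuples X d. in_grid js' Ls (x0[j := a]) y \<longrightarrow> c y = \<gamma>"
      using Suc.IH[OF B'(1) B'Y' Y'X upd[OF a] js'] by blast
    then have "good a (Ls, \<gamma>)" unfolding good_def by simp
    then show ?thesis by blast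
  qed
  then obtain G where G: "\<forall>a\<in>Y. good a (G a)" by metis
  define T where "T = tuples (tuples Y' n) (length js')"
  have "G ` Y \<subseteq> T \<times> C"
  proof (rule image_subsetI)
    fix a assume "a \<in> Y"
    then have "good a (G a)" using G by blast
    then show "G a \<in> T \<times> C"
      unfolding good_def T_def grid_lines_def by (auto simp: tuples_def mem_Times_iff)
  qed
  moreover have "|T \<times> C| <o |Y|"
  proof -
    have "|T| \<le>o |Y'|" unfolding T_def
      using card_of_tuples_ordLeq_infinite[OF \<open>infinite Y'\<close>] card_of_mono1[of Y' Y'] by (metis order_refl)
    then have "|T \<times> C| \<le>o |Y'|"
      using CY' \<open>infinite Y'\<close>
      by (intro card_of_Times_ordLeq_infinite_Field) (simp_all add: Field_card_of card_of_card_order_on)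
    then show ?thesis using Y'Y ordLeq_ordLess_trans by blast
  qed
  ultimately obtain a l where l: "a \<in> Y" "distinct l" "length l = n" "set l \<subseteq> Y" "\<forall>b\<in>set l. G b = G a"
    using infinite_fibre_list[OF \<open>infinite Y\<close>] by blast
  obtain Ls' \<gamma> where Ga: "G a = (Ls', \<gamma>)" by fastforce
  have "c y = \<gamma>" if "y \<in> tuples X d" "in_grid (j # js') (l # Ls') x0 y" for y
  proof -
    have "y ! j \<in> set l" "in_grid js' Ls' (x0[j := y ! j]) y"
      using in_grid_Cons_rebase[OF that(2) j] by auto
    moreover have "good (y ! j) (Ls', \<gamma>)" using G l(4,5) Ga \<open>y ! j \<in> set l\<close> by force
    ultimately show ?thesis using that(1) unfolding good_def by simp
  qed
  moreover have "good a (Ls', \<gamma>)" using G l(1) Ga by force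
  then have "grid_lines n Y (l # Ls')" "\<gamma> \<in> C" "length (l # Ls') = length js"
    using l(2-4) Y'(1) js unfolding good_def grid_lines_def by auto
  ultimately show ?case unfolding js(1) by blast
qed

lemma monochromatic_grid:
  fixes c :: "'a list \<Rightarrow> 'c"
  assumes "infinite X" "csucc_rel m C B" "|B| <o |X|" "c ` tuples X d \<subseteq> C" "x0 \<in> tuples X d"
    "distinct js" "set js \<subseteq> {..<d}" "length js = Suc m"
  shows "\<exists>Ls \<gamma>. length Ls = length js \<and> grid_lines n X Ls \<and>
      (\<forall>y\<in>tuples X d. in_grid js Ls x0 y \<longrightarrow> c y = \<gamma>)"
proof (cases "finite C")
  case True
  then show ?thesis using monochromatic_grid_finite[OF assms(1,5,4) True assms(6,7)] by blast
next
  case False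
  then show ?thesis using monochromatic_grid_infinite[OF False assms(4,2,3) subset_refl assms(5-8)] by blast
qed

lemma template_hom_into_grid:
  assumes "finite P" "distinguisher d P (set js)" "distinct js" "length Ls = length js"
    "grid_lines n X Ls" "card P \<le> n" "x0 \<in> tuples X d"
  obtains f where "template_hom d P (f ` P) f" "f ` P \<subseteq> tuples X d" "\<forall>p\<in>P. in_grid js Ls x0 (f p)"
proof -
  define V where "V i = (\<lambda>p. p ! i) ` P" for i
  have "\<exists>g. \<forall>t<length js. js ! t = i \<longrightarrow> inj_on g (V i) \<and> g ` V i \<subseteq> set (Ls ! t)"
    if i: "i \<in> set js" for i
  proof -
    obtain t where t: "t < length js" "js ! t = i" using i by (auto simp: in_set_conv_nth)
    have "card (V i) \<le> card P" unfolding V_def by (rule card_image_le[OF assms(1)])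
    also have "\<dots> \<le> length (Ls ! t)" using assms(4-6) t(1) unfolding grid_lines_def by simp
    also have "\<dots> = card (set (Ls ! t))"
      using assms(4,5) t(1) distinct_card[of "Ls ! t"] unfolding grid_lines_def by simp
    finally obtain g where "inj_on g (V i)" "g ` V i \<subseteq> set (Ls ! t)"
      using card_le_inj[of "V i" "set (Ls ! t)"] assms(1) unfolding V_def by auto
    moreover have "t' = t" if "t' < length js" "js ! t' = i" for t'
      using nth_eq_iff_index_eq[OF assms(3) that(1) t(1)] t(2) that(2) by simp
    ultimately show ?thesis by blast
  qed
  then have "\<forall>i\<in>set js. \<exists>g. \<forall>t<length js. js ! t = i \<longrightarrow>
      inj_on g (V i) \<and> g ` V i \<subseteq> set (Ls ! t)" by blast
  then obtain G where G: "\<forall>i\<in>set js. \<forall>t<length js. js ! t = i \<longrightarrow>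
      inj_on (G i) (V i) \<and> G i ` V i \<subseteq> set (Ls ! t)"
    by (rule bchoice[THEN exE])
  have G_inj: "inj_on (G i) (V i)" if i: "i \<in> set js" for i
  proof -
    obtain t where "t < length js" "js ! t = i" using i by (auto simp: in_set_conv_nth)
    then show ?thesis using G i by blast
  qed
  have G_in: "G (js ! t) (p ! (js ! t)) \<in> set (Ls ! t)" if "p \<in> P" "t < length js" for p t
  proof -
    have "G (js ! t) ` V (js ! t) \<subseteq> set (Ls ! t)" using G that(2) by simp
    moreover have "p ! (js ! t) \<in> V (js ! t)" using that(1) unfolding V_def by simp
    ultimately show ?thesis by blast
  qed
  have js: "set js \<subseteq> {..<d}" using assms(2) by (simp add: distinguisher_def)
  have x0: "length x0 = d" "set x0 \<subseteq> X" using assms(7) by (auto simp: tuples_def)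
  define f where "f p = map (\<lambda>i. if i \<in> set js then G i (p ! i) else x0 ! i) [0..<d]" for p
  have fnth: "f p ! i = (if i \<in> set js then G i (p ! i) else x0 ! i)" if "i < d" for p i
    using that by (simp add: f_def)
  have grid: "in_grid js Ls x0 (f p)" if "p \<in> P" for p
    unfolding in_grid_def
  proof (intro conjI allI impI)
    show "length (f p) = length x0" using x0 by (simp add: f_def)
    show "f p ! i = x0 ! i" if "i < length x0" "i \<notin> set js" for i
      using that fnth x0 by simp
    show "f p ! (js ! t) \<in> set (Ls ! t)" if "t < length js" for t
    proof -
      have "js ! t < d" using that js nth_mem by fastforce
      then show ?thesis using fnth[of "js ! t" p] G_in[OF \<open>p \<in> P\<close> that] that by simp
    qed
  qed
  have f_tuples: "f p \<in> tuples X d" if "p \<in> P" for p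
  proof -
    have "f p ! i \<in> X" if "i < d" for i
    proof (cases "i \<in> set js")
      case True
      then obtain t where t: "t < length js" "js ! t = i" by (auto simp: in_set_conv_nth)
      then have "set (Ls ! t) \<subseteq> X" using assms(4,5) unfolding grid_lines_def by auto
      then show ?thesis using G_in[OF \<open>p \<in> P\<close> t(1)] fnth[OF that] True t(2) by auto
    next
      case False
      then show ?thesis using fnth[OF that] x0 that by auto
    qed
    moreover have "length (f p) = d" by (simp add: f_def)
    ultimately show ?thesis by (auto simp: tuples_def in_set_conv_nth)
  qed
  have "inj_on f P"
  proof (rule inj_onI, rule ccontr)
    fix p q assume pq: "p \<in> P" "q \<in> P" "f p = f q" "p \<noteq> q"
    then obtain i where i: "i \<in> set js" "p ! i \<noteq> q ! i"
      using assms(2) unfolding distinguisher_def by blast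
    have "p ! i \<in> V i" "q ! i \<in> V i" using pq(1,2) unfolding V_def by auto
    then have "G i (p ! i) \<noteq> G i (q ! i)" using inj_on_eq_iff[OF G_inj[OF i(1)]] i(2) by simp
    moreover have "i < d" using i(1) js by auto
    then have "f p ! i = G i (p ! i)" "f q ! i = G i (q ! i)" using fnth i(1) by auto
    ultimately show False using pq(3) by simp
  qed
  then have "template_hom d P (f ` P) f"
    unfolding template_hom_def using fnth by simp
  moreover have "f ` P \<subseteq> tuples X d" using f_tuples by blast
  ultimately show thesis using that grid by blast
qed

lemma no_proper_coloring_below:
  fixes C B :: "'c set"
  assumes "infinite X" "P \<in> \<P>" "is_template d k P" "e_num d P = Suc m" "csucc_rel m C B" "|B| <o |X|"
  shows "\<not> proper_coloring (tuples X d) (L_edges X d k \<P>) C \<phi>"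
proof
  assume proper: "proper_coloring (tuples X d) (L_edges X d k \<P>) C \<phi>"
  obtain I where I: "distinguisher d P I" "card I = Suc m"
    using e_num_distinguisher[OF assms(3)] assms(4) by auto
  then have "finite I" using finite_subset[of I "{..<d}"] by (simp add: distinguisher_def)
  then obtain js where js: "set js = I" "distinct js" using finite_distinct_list by blast
  then have "length js = Suc m" "set js \<subseteq> {..<d}"
    using I distinct_card[of js] by (auto simp: distinguisher_def)
  obtain x where "x \<in> X" using infinite_imp_nonempty[OF assms(1)] by blast
  then have x0: "replicate d x \<in> tuples X d" by (auto simp: tuples_def)
  have "\<phi> ` tuples X d \<subseteq> C" using proper by (simp add: proper_coloring_def)
  then obtain Ls \<gamma> where grid: "length Ls = length js" "grid_lines k X Ls"
    "\<forall>y\<in>tuples X d. in_grid js Ls (replicate d x) y \<longrightarrow> \<phi> y = \<gamma>"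
    using monochromatic_grid[OF assms(1,5,6) _ x0 js(2) \<open>set js \<subseteq> {..<d}\<close> \<open>length js = Suc m\<close>]
    by blast
  have P: "finite P" "card P = k" using assms(3) by (auto simp: is_template_def)
  have "distinguisher d P (set js)" using I(1) js(1) by simp
  then obtain f where f: "template_hom d P (f ` P) f" "f ` P \<subseteq> tuples X d"
    "\<forall>p\<in>P. in_grid js Ls (replicate d x) (f p)"
    using template_hom_into_grid[OF P(1) _ js(2) grid(1,2) _ x0] P(2) by blast
  have "card (f ` P) = k" using f(1) P(2) card_image unfolding template_hom_def by blast
  then have "f ` P \<in> L_edges X d k \<P>"
    using f(1,2) P(1) assms(2) unfolding L_edges_def hom_image_def by blast
  then obtain u v where "u \<in> f ` P" "v \<in> f ` P" "\<phi> u \<noteq> \<phi> v"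
    using proper unfolding proper_coloring_def by blast
  moreover have "\<phi> w = \<gamma>" if "w \<in> f ` P" for w
    using that grid(3) f(2,3) by blast
  ultimately show False by simp
qed

section \<open>The chromatic number\<close>

lemma chromatic_number_is_no_edges:
  assumes "v \<in> V"
  shows "chromatic_number_is V {} {c}"
  unfolding chromatic_number_is_def
proof (intro conjI allI impI)
  show "\<exists>\<phi>. proper_coloring V {} {c} \<phi>" by (auto simp: proper_coloring_def)
  fix C assume "\<exists>\<phi>. proper_coloring V {} C \<phi>"
  then obtain \<phi> where "\<phi> v \<in> C" using assms unfolding proper_coloring_def by blast
  then show "|{c}| \<le>o |C|" using card_of_ordLeq[of "{c}" C] by force
qed

lemma chromatic_number_is_card_minus:
  fixes X K :: "'u set"
  assumes "2 \<le> k" "\<forall>P\<in>\<P>. is_template d k P" "infinite X"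
    "P0 \<in> \<P>" "\<forall>P\<in>\<P>. e_num d P0 \<le> e_num d P" "card_minus_is X (e_num d P0 - 1) K"
  shows "chromatic_number_is (tuples X d) (L_edges X d k \<P>) K"
proof -
  obtain m where m: "e_num d P0 = Suc m"
    using e_num_pos assms(1,2,4) gr0_implies_Suc by blast
  have K: "succ_ge m K X" "\<And>A. succ_ge m A X \<Longrightarrow> |K| \<le>o |A|"
    using assms(6) m unfolding card_minus_is_def by auto
  have "\<forall>P\<in>\<P>. m < e_num d P" using assms(5) m by fastforce
  then have "\<exists>\<psi>. proper_coloring (tuples X d) (L_edges X d k \<P>) K \<psi>"
    by (intro proper_coloring_exists[OF K(1) assms(3)]) (use assms(1) in simp_all)
  moreover have "|K| \<le>o |C|"
    if "proper_coloring (tuples X d) (L_edges X d k \<P>) C \<phi>" for C :: "'u set" and \<phi>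
  proof (rule ccontr)
    assume "\<not> |K| \<le>o |C|"
    then have "\<not> succ_ge m C X" using K(2) by blast
    then obtain B where "csucc_rel m C B" "|B| <o |X|" unfolding succ_ge_def by blast
    moreover have "is_template d k P0" using assms(2,4) by blast
    ultimately show False using no_proper_coloring_below[OF assms(3,4) _ m] that by blast
  qed
  ultimately show ?thesis unfolding chromatic_number_is_def by blast
qed

theorem corollary2p2:
  fixes \<P> :: "'a list set set" and X :: "'b set" and d k :: nat
  assumes "2 \<le> k"
    and "\<forall>P\<in>\<P>. is_template d k P"
    and "infinite X"
  shows "(\<P> = {} \<longrightarrow>
            (\<exists>K::'b set. chromatic_number_is (tuples X d) (L_edges X d k \<P>) K
                         \<and> finite K \<and> card K = 1))
       \<and> (\<P> \<noteq> {} \<longrightarrow>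
            (let e = (LEAST n. n \<in> e_num d ` \<P>) in
             \<exists>K::'b set. chromatic_number_is (tuples X d) (L_edges X d k \<P>) K
                         \<and> card_minus_is X (e - 1) K))"
proof (intro conjI impI)
  obtain x where "x \<in> X" using infinite_imp_nonempty[OF assms(3)] by blast
  then have "replicate d x \<in> tuples X d" by (auto simp: tuples_def)
  moreover assume "\<P> = {}"
  then have "L_edges X d k \<P> = {}" by (simp add: L_edges_def)
  ultimately have "chromatic_number_is (tuples X d) (L_edges X d k \<P>) {x}"
    using chromatic_number_is_no_edges by metis
  then show "\<exists>K::'b set. chromatic_number_is (tuples X d) (L_edges X d k \<P>) K \<and> finite K \<and> card K = 1"
    by (intro exI[of _ "{x}"]) simp
next
  assume "\<P> \<noteq> {}"
  define e where "e = (LEAST n. n \<in> e_num d ` \<P>)"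
  have "e \<in> e_num d ` \<P>" unfolding e_def by (rule LeastI_ex) (use \<open>\<P> \<noteq> {}\<close> in blast)
  then obtain P0 where P0: "P0 \<in> \<P>" "e_num d P0 = e" by blast
  have "\<forall>P\<in>\<P>. e_num d P0 \<le> e_num d P" unfolding P0(2) e_def by (auto intro: Least_le)
  moreover obtain K :: "'b set" where K: "card_minus_is X (e - 1) K" using card_minus_exists by blast
  ultimately have "chromatic_number_is (tuples X d) (L_edges X d k \<P>) K"
    using chromatic_number_is_card_minus[OF assms P0(1)] P0(2) by blast
  then show "let e = (LEAST n. n \<in> e_num d ` \<P>) in
      \<exists>K::'b set. chromatic_number_is (tuples X d) (L_edges X d k \<P>) K \<and> card_minus_is X (e - 1) K"
    using K unfolding e_def Let_def by blast
qed

end
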